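(* Let $n\ge 9$ be odd and let $k$ be even with $4\le k<n$. Then $\mu(C(k,n))=k$.
   Context: For even $k$, the circulant $C(k,n)$ is the graph on vertex set $\{1,\dots,n\}$ in which distinct $i<j$ are adjacent iff $\min(j-i,\ i+n-j)\le k/2$. For a simple graph $G=(V,E)$ on $n$ vertices, a fractional vertex cover is a function $f:V\to[0,\infty)$ with $f(u)+f(v)\ge 1$ for every edge $uv$; $\tau^*(G)$ is the minimum of $\sum_v f(v)$ over these. For $E'\subseteq E$ let $G-E'=(V,E\setminus E')$, and $\mu(G)=\min\{|E'|: E'\subseteq E,\ \tau^*(G-E')<n/2\}$ (equivalently, the minimum number of edges whose deletion leaves no spanning subgraph whose components are all $K_2$'s or odd cycles). *)

theory Defs
  imports Complex_Main
begin

definition circulant_edges :: "nat \<Rightarrow> nat \<Rightarrow> nat set set" where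
  "circulant_edges k n =
     {{i, j} | i j. 1 \<le> i \<and> i < j \<and> j \<le> n \<and> min (j - i) (i + n - j) \<le> k div 2}"

definition frac_vertex_cover :: "nat set \<Rightarrow> nat set set \<Rightarrow> (nat \<Rightarrow> real) \<Rightarrow> bool" where
  "frac_vertex_cover V E f \<longleftrightarrow>
     (\<forall>v\<in>V. 0 \<le> f v) \<and> (\<forall>u v. {u, v} \<in> E \<longrightarrow> f u + f v \<ge> 1)"

definition tau_star :: "nat set \<Rightarrow> nat set set \<Rightarrow> real" where
  "tau_star V E = Inf {(\<Sum>v\<in>V. f v) | f. frac_vertex_cover V E f}"

definition mu :: "nat set \<Rightarrow> nat set set \<Rightarrow> nat" where
  "mu V E = (LEAST m. \<exists>E'. E' \<subseteq> E \<and> card E' = m \<and> tau_star V (E - E') < real (card V) / 2)"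

end

theory Submission
  imports Defs "HOL-Number_Theory.Cong"
begin

text \<open>
  Deleting the 2d edges at vertex 1 isolates it, and weight 1/2 on the remaining vertices is a
  fractional cover of weight (n - 1)/2. Conversely, let fewer than 2d edges be deleted and let
  f be a fractional cover of weight < n/2 of what remains. Work in \<open>\<int>/n\<close> and let D_l be the
  set of x whose edge {x, x + l} is deleted (1 \<le> l \<le> d). Then \<open>\<Sum>|D_l| < 2d\<close>, so some D_j has
  at most one element. If D_j is empty, the j-edges cover every vertex twice and f has weight
  \<open>\<ge> n/2\<close>. If D_j = {a}, the orbit of a under x \<mapsto> x + j, of odd size c = n / gcd n j, is a
  path from a + j to a, and every other orbit is an odd cycle of j-edges. A chord joining two
  even positions of the path, or an edge from an even position of the path to another orbit,
  would push the weight to at least n/2, so all these edges are deleted. Counting them gives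
  |D_l| \<ge> 2 for l \<noteq> j, and |D_l| \<ge> 3 unless l \<equiv> \<plusminus>3j (mod n), which some l \<noteq> j avoids. Hence
  \<open>\<Sum>|D_l| \<ge> 1 + 3 + 2(d - 2) = 2d\<close>, a contradiction.
\<close>

lemma tau_star_geI:
  assumes "\<And>f. frac_vertex_cover V E f \<Longrightarrow> x \<le> (\<Sum>v\<in>V. f v)"
  shows "x \<le> tau_star V E"
  unfolding tau_star_def
proof (rule cInf_greatest)
  have "frac_vertex_cover V E (\<lambda>_. 1)" by (simp add: frac_vertex_cover_def)
  then show "{\<Sum>v\<in>V. f v |f. frac_vertex_cover V E f} \<noteq> {}" by blast
qed (use assms in blast)

lemma tau_star_le:
  assumes "frac_vertex_cover V E f"
  shows "tau_star V E \<le> (\<Sum>v\<in>V. f v)"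
  unfolding tau_star_def
proof (rule cInf_lower)
  show "bdd_below {\<Sum>v\<in>V. f v |f. frac_vertex_cover V E f}"
    by (rule bdd_belowI[of _ 0]) (auto simp: frac_vertex_cover_def intro: sum_nonneg)
qed (use assms in blast)

lemma mu_eqI:
  assumes "E' \<subseteq> E" "card E' = m" "tau_star V (E - E') < real (card V) / 2"
    and "\<And>E'. E' \<subseteq> E \<Longrightarrow> card E' < m \<Longrightarrow> real (card V) / 2 \<le> tau_star V (E - E')"
  shows "mu V E = m"
  unfolding mu_def
proof (rule Least_equality)
  show "\<exists>E'. E' \<subseteq> E \<and> card E' = m \<and> tau_star V (E - E') < real (card V) / 2"
    using assms(1-3) by blast
next
  fix m' assume "\<exists>E'. E' \<subseteq> E \<and> card E' = m' \<and> tau_star V (E - E') < real (card V) / 2"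
  then show "m \<le> m'" using assms(4) by (meson leI linorder_not_less)
qed

lemma tau_star_remove_star_less:
  assumes "finite V" "v \<in> V"
  shows "tau_star V (E - {e \<in> E. v \<in> e}) < real (card V) / 2"
proof -
  define g where "g u = (if u = v then 0 else 1 / 2 :: real)" for u
  have "frac_vertex_cover V (E - {e \<in> E. v \<in> e}) g"
    by (auto simp: frac_vertex_cover_def g_def)
  then have "tau_star V (E - {e \<in> E. v \<in> e}) \<le> (\<Sum>u\<in>V. g u)" by (rule tau_star_le)
  also have "(\<Sum>u\<in>V. g u) = (\<Sum>u\<in>V - {v}. 1 / 2)"
    using assms by (simp add: sum.remove g_def)
  also have "\<dots> < real (card V) / 2"
    using assms card_gt_0_iff[of V] by (auto simp: card_Diff_singleton of_nat_diff)
  finally show ?thesis .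
qed

lemma sum_consecutive_pairs_ge:
  fixes x :: "nat \<Rightarrow> real"
  assumes "\<And>r. m \<le> r \<Longrightarrow> r + 1 < m + 2 * t \<Longrightarrow> 1 \<le> x r + x (r + 1)"
  shows "real t \<le> (\<Sum>r\<in>{m..<m + 2 * t}. x r)"
  using assms
proof (induction t)
  case (Suc t)
  have "real t \<le> (\<Sum>r\<in>{m..<m + 2 * t}. x r)" using Suc by force
  moreover have "1 \<le> x (m + 2 * t) + x (m + 2 * t + 1)" using Suc.prems by simp
  moreover have "{m..<m + 2 * Suc t} = insert (m + 2 * t + 1) (insert (m + 2 * t) {m..<m + 2 * t})"
    by auto
  ultimately show ?case by simp
qed simp

lemma odd_cycle_sum_ge:
  fixes x :: "nat \<Rightarrow> real"
  assumes "p \<le> q" "\<And>r. p \<le> r \<Longrightarrow> r < q \<Longrightarrow> 1 \<le> x r + x (r + 1)" "1 \<le> x p + x q"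
  shows "real (q - p) + 1 \<le> 2 * (\<Sum>r\<in>{p..q}. x r)"
proof -
  have "(\<Sum>r\<in>{p..<q}. x r + x (r + 1)) + x p + x q = 2 * (\<Sum>r\<in>{p..q}. x r)"
    using assms(1)
  proof (induction q rule: dec_induct)
    case (step q)
    have "{p..<Suc q} = insert q {p..<q}" "{p..Suc q} = insert (Suc q) {p..q}"
      using step.hyps by auto
    then show ?case using step.IH by simp
  qed simp
  moreover have "(\<Sum>r\<in>{p..<q}. 1) \<le> (\<Sum>r\<in>{p..<q}. x r + x (r + 1))"
    by (rule sum_mono) (use assms(2) in auto)
  ultimately show ?thesis using assms(3) by simp
qed

lemma odd_path_sum_ge:
  fixes x :: "nat \<Rightarrow> real"
  assumes "odd c" "p < c" "even p" "\<And>r. r + 1 < c \<Longrightarrow> 1 \<le> x r + x (r + 1)"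
  shows "real c - 1 + 2 * x p \<le> 2 * (\<Sum>r<c. x r)"
proof -
  define s t where "s = p div 2" and "t = (c - Suc p) div 2"
  then have s: "p = 0 + 2 * s" and t: "c = Suc p + 2 * t"
    using assms(1-3) by presburger+
  have "real s \<le> (\<Sum>r\<in>{0..<p}. x r)"
    using sum_consecutive_pairs_ge[of 0 s x] assms(2,4) s by auto
  moreover have "real t \<le> (\<Sum>r\<in>{Suc p..<c}. x r)"
    using sum_consecutive_pairs_ge[of "Suc p" t x] assms(4) t by auto
  moreover have "(\<Sum>r<c. x r) = (\<Sum>r\<in>{0..<p}. x r) + (\<Sum>r\<in>{p..<c}. x r)"
    using assms(2) by (simp add: lessThan_atLeast0 sum.atLeastLessThan_concat)
  moreover have "(\<Sum>r\<in>{p..<c}. x r) = x p + (\<Sum>r\<in>{Suc p..<c}. x r)"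
    using assms(2) by (rule sum.atLeast_Suc_lessThan)
  moreover have "real c = 2 * real s + 1 + 2 * real t" using s t by simp
  ultimately show ?thesis by simp
qed

lemma odd_path_chord_sum_ge:
  fixes x :: "nat \<Rightarrow> real"
  assumes "odd c" "p < q" "q < c" "even p" "even q"
    and "\<And>r. r + 1 < c \<Longrightarrow> 1 \<le> x r + x (r + 1)" and "1 \<le> x p + x q"
  shows "real c \<le> 2 * (\<Sum>r<c. x r)"
proof -
  define s t where "s = p div 2" and "t = (c - Suc q) div 2"
  then have s: "p = 0 + 2 * s" and t: "c = Suc q + 2 * t"
    using assms(1-5) by presburger+
  have "real s \<le> (\<Sum>r\<in>{0..<p}. x r)"
    using sum_consecutive_pairs_ge[of 0 s x] assms(2,3,6) s by auto
  moreover have "real (q - p) + 1 \<le> 2 * (\<Sum>r\<in>{p..q}. x r)"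
    by (rule odd_cycle_sum_ge) (use assms in auto)
  moreover have "real t \<le> (\<Sum>r\<in>{Suc q..<c}. x r)"
    using sum_consecutive_pairs_ge[of "Suc q" t x] assms(6) t by auto
  moreover have "(\<Sum>r<c. x r) = (\<Sum>r\<in>{0..<p}. x r) + (\<Sum>r\<in>{p..<Suc q}. x r) + (\<Sum>r\<in>{Suc q..<c}. x r)"
    using assms(2,3) by (simp only: lessThan_atLeast0 sum.atLeastLessThan_concat
        less_imp_le_nat Suc_leI le_SucI)
  moreover have "{p..<Suc q} = {p..q}" by auto
  moreover have "real c = 2 * real s + (real (q - p) + 1) + 2 * real t"
    using s t assms(2) by simp
  ultimately show ?thesis by simp
qed

lemma cycle_cover_sum_ge:
  fixes x :: "'a \<Rightarrow> real"
  assumes "finite A" "inj_on \<sigma> A" "\<sigma> ` A \<subseteq> A" "\<And>y. y \<in> A \<Longrightarrow> 1 \<le> x y + x (\<sigma> y)"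
  shows "real (card A) \<le> 2 * (\<Sum>y\<in>A. x y)"
proof -
  have "(\<Sum>y\<in>A. x (\<sigma> y)) = (\<Sum>y\<in>A. x y)"
    using sum.reindex[OF assms(2), of x] endo_inj_surj[OF assms(1,3,2)] by simp
  moreover have "(\<Sum>y\<in>A. 1) \<le> (\<Sum>y\<in>A. x y + x (\<sigma> y))"
    by (rule sum_mono) (rule assms(4))
  ultimately show ?thesis by (simp add: sum.distrib)
qed

lemma int_dvd_mult_iff_dvd_div_gcd:
  fixes n j :: nat
  assumes "0 < j"
  shows "int n dvd r * int j \<longleftrightarrow> int (n div gcd n j) dvd r"
proof -
  define g c j' where "g = gcd n j" and "c = n div g" and "j' = j div g"
  have "0 < g" using assms by (simp add: g_def)
  have "n = g * c" "j = g * j'" by (simp_all add: g_def c_def j'_def)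
  then have n: "int n = int g * int c" and j: "r * int j = int g * (r * int j')"
    by (metis of_nat_mult, simp)
  have "coprime (int c) (int j')"
    using div_gcd_coprime[of n j] assms by (simp add: g_def c_def j'_def)
  then have "int n dvd r * int j \<longleftrightarrow> int c dvd r * int j'"
    unfolding n j using \<open>0 < g\<close> by simp
  also have "\<dots> \<longleftrightarrow> int c dvd r"
    using \<open>coprime (int c) (int j')\<close> by (rule coprime_dvd_mult_left_iff)
  finally show ?thesis by (simp add: c_def g_def)
qed

lemma cong_add_dvd_iff:
  fixes m t y y' :: int
  assumes "m dvd t"
  shows "[y + t = y'] (mod m) \<longleftrightarrow> [y = y'] (mod m)"
proof -
  have "y + t - y' = (y - y') + t" by simp
  then show ?thesis using dvd_add_left_iff[OF assms, of "y - y'"] by (simp only: cong_iff_dvd_diff)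
qed

text \<open>The orbit of z under y \<mapsto> y + j in \<open>\<int>/n\<close>, with representatives in [0, n), is a residue
  class modulo gcd n j; \<open>bij_betw_shift_orbit\<close> recovers its description as an orbit.\<close>

definition shift_orbit :: "nat \<Rightarrow> nat \<Rightarrow> int \<Rightarrow> int set" where
  "shift_orbit n j z = {y \<in> {0..<int n}. [y = z] (mod int (gcd n j))}"

lemma inj_on_progression_mod:
  fixes n j :: nat and z :: int
  assumes "0 < j"
  shows "inj_on (\<lambda>r. (z + int r * int j) mod int n) {..<n div gcd n j}"
proof (rule inj_onI)
  fix r r' assume r: "r \<in> {..<n div gcd n j}" "r' \<in> {..<n div gcd n j}"
    and "(z + int r * int j) mod int n = (z + int r' * int j) mod int n"
  then have "int n dvd (int r - int r') * int j"
    by (simp add: mod_eq_dvd_iff algebra_simps)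
  then have "[r = r'] (mod n div gcd n j)"
    using assms by (simp add: int_dvd_mult_iff_dvd_div_gcd cong_iff_dvd_diff flip: cong_int_iff)
  then show "r = r'" using r cong_less_modulus_unique_nat by blast
qed

lemma bij_betw_shift_orbit:
  fixes n j :: nat and z :: int
  assumes "0 < n" "0 < j"
  shows "bij_betw (\<lambda>r. (z + int r * int j) mod int n) {..<n div gcd n j} (shift_orbit n j z)"
proof (rule bij_betw_imageI)
  define c where "c = n div gcd n j"
  have "0 < c" using assms by (simp add: c_def div_greater_zero_iff)
  have key: "int n dvd r * int j \<longleftrightarrow> int c dvd r" for r
    unfolding c_def using assms(2) by (rule int_dvd_mult_iff_dvd_div_gcd)
  show "inj_on (\<lambda>r. (z + int r * int j) mod int n) {..<c}"
    unfolding c_def using assms(2) by (rule inj_on_progression_mod)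
  show "(\<lambda>r. (z + int r * int j) mod int n) ` {..<c} = shift_orbit n j z"
  proof (intro equalityI subsetI)
    fix y assume "y \<in> (\<lambda>r. (z + int r * int j) mod int n) ` {..<c}"
    then obtain r where y: "y = (z + int r * int j) mod int n" by blast
    have "[y = z + int r * int j] (mod int (gcd n j))"
      unfolding y by (rule cong_dvd_modulus[of _ _ "int n"]) simp_all
    also have "[z + int r * int j = z] (mod int (gcd n j))"
      by (simp add: cong_0_iff cong_add_lcancel_0)
    finally show "y \<in> shift_orbit n j z"
      using assms(1) by (simp add: shift_orbit_def y)
  next
    fix y assume "y \<in> shift_orbit n j z"
    then have y: "0 \<le> y" "y < int n" and "int (gcd n j) dvd y - z"
      by (auto simp: shift_orbit_def cong_iff_dvd_diff)
    then obtain t where t: "y - z = int (gcd n j) * t" by blast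
    \<comment> \<open>by Bezout, y - z = t gcd n j \<equiv> t v j (mod n)\<close>
    obtain u v where uv: "u * int n + v * int j = int (gcd n j)"
      using bezout_int[of "int n" "int j"] by auto
    define r where "r = nat ((t * v) mod int c)"
    have "int c dvd t * v - int r" using \<open>0 < c\<close> by (simp add: r_def mod_eq_dvd_iff[symmetric])
    then have "int n dvd (t * v - int r) * int j" by (simp add: key)
    then have "int n dvd t * u * int n + (t * v - int r) * int j" by simp
    also have "t * u * int n + (t * v - int r) * int j = y - (z + int r * int j)"
      using t uv[symmetric] by (simp add: algebra_simps)
    finally have "y = (z + int r * int j) mod int n"
      using y by (simp add: mod_eq_dvd_iff[symmetric])
    moreover have "r < c" using \<open>0 < c\<close> by (simp add: r_def nat_less_iff)
    ultimately show "y \<in> (\<lambda>r. (z + int r * int j) mod int n) ` {..<c}" by blast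
  qed
qed

lemma shift_orbit_subset: "shift_orbit n j z \<subseteq> {0..<int n}"
  by (auto simp: shift_orbit_def)

lemma card_shift_orbit: "0 < n \<Longrightarrow> 0 < j \<Longrightarrow> card (shift_orbit n j z) = n div gcd n j"
  using bij_betw_same_card[OF bij_betw_shift_orbit] by simp

lemma sum_shift_orbit:
  "0 < n \<Longrightarrow> 0 < j \<Longrightarrow>
    (\<Sum>y\<in>shift_orbit n j z. x y) = (\<Sum>r<n div gcd n j. x ((z + int r * int j) mod int n))"
  using sum.reindex_bij_betw[OF bij_betw_shift_orbit, of n j x z] by simp

lemma shift_orbit_cong: "[z = z'] (mod int (gcd n j)) \<Longrightarrow> shift_orbit n j z = shift_orbit n j z'"
  by (auto simp: shift_orbit_def intro: cong_trans cong_sym)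

lemma shift_orbits_disjoint:
  "\<not> [z = z'] (mod int (gcd n j)) \<Longrightarrow> shift_orbit n j z \<inter> shift_orbit n j z' = {}"
  by (auto simp: shift_orbit_def intro: cong_trans cong_sym)

lemma shift_mem_shift_orbit_iff:
  assumes "0 < n"
  shows "(y + int j) mod int n \<in> shift_orbit n j z \<longleftrightarrow> [y = z] (mod int (gcd n j))"
proof -
  have "[(y + int j) mod int n = y + int j] (mod int (gcd n j))"
    by (rule cong_dvd_modulus[of _ _ "int n"]) simp_all
  also have "[y + int j = y] (mod int (gcd n j))"
    by (simp add: cong_0_iff cong_add_lcancel_0)
  finally have "[(y + int j) mod int n = y] (mod int (gcd n j))" .
  then show ?thesis
    using assms by (simp add: shift_orbit_def) (metis cong_sym cong_trans)
qed

text \<open>Residue x of \<open>\<int>/n\<close> is vertex (x mod n) + 1 of the circulant, and \<open>circ_edge n x l\<close> is its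
  edge of length l starting at x.\<close>

definition circ_vertex :: "nat \<Rightarrow> int \<Rightarrow> nat" where
  "circ_vertex n x = nat (x mod int n) + 1"

definition circ_edge :: "nat \<Rightarrow> int \<Rightarrow> nat \<Rightarrow> nat set" where
  "circ_edge n x l = {circ_vertex n x, circ_vertex n (x + int l)}"

lemma circ_vertex_eq_iff: "0 < n \<Longrightarrow> circ_vertex n x = circ_vertex n y \<longleftrightarrow> [x = y] (mod int n)"
  by (simp add: circ_vertex_def cong_def eq_nat_nat_iff)

lemma sum_circ_vertex: "(\<Sum>v\<in>{1..n}. f v) = (\<Sum>x\<in>{0..<int n}. f (circ_vertex n x))"
  by (rule sum.reindex_bij_witness[where i="\<lambda>x. nat x + 1" and j="\<lambda>v. int v - 1"])
     (auto simp: circ_vertex_def intro!: arg_cong[where f=f])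

lemma circ_edge_mod [simp]: "circ_edge n (x mod int n) l = circ_edge n x l"
  by (simp add: circ_edge_def circ_vertex_def mod_add_left_eq)

lemma circ_edge_in_circulant_edges:
  assumes "1 \<le> l" "l \<le> k div 2" "l < n"
  shows "circ_edge n x l \<in> circulant_edges k n"
proof -
  define u where "u = nat (x mod int n)"
  have "u < n" using assms(3) by (simp add: u_def nat_less_iff)
  have "(x + int l) mod int n = int ((u + l) mod n)"
    using assms(3) by (simp add: u_def of_nat_mod mod_add_left_eq)
  then have e: "circ_edge n x l = {u + 1, (u + l) mod n + 1}"
    by (simp add: circ_edge_def circ_vertex_def u_def)
  show ?thesis
  proof (cases "u + l < n")
    case True
    then show ?thesis unfolding e circulant_edges_def
      using assms by (intro CollectI exI[of _ "u + 1"] exI[of _ "u + l + 1"]) auto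
  next
    case False
    then have "(u + l) mod n = u + l - n" using \<open>u < n\<close> assms(3) by (simp add: le_mod_geq)
    then show ?thesis unfolding e circulant_edges_def
      using assms False \<open>u < n\<close>
      by (intro CollectI exI[of _ "u + l - n + 1"] exI[of _ "u + 1"]) auto
  qed
qed

lemma circ_edge_inj:
  assumes "0 < l" "0 < l'" "l + l' < n" "x \<in> {0..<int n}" "x' \<in> {0..<int n}"
    and "circ_edge n x l = circ_edge n x' l'"
  shows "l = l' \<and> x = x'"
proof -
  have "0 < n" using assms(3) by simp
  from assms(6) consider "[x = x'] (mod int n)" "[x + int l = x' + int l'] (mod int n)"
    | "[x = x' + int l'] (mod int n)" "[x + int l = x'] (mod int n)"
    by (auto simp: circ_edge_def doubleton_eq_iff circ_vertex_eq_iff[OF \<open>0 < n\<close>])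
  then show ?thesis
  proof cases
    case 1
    then have "x = x'" using assms(4,5) cong_less_imp_eq_int by auto
    with 1(2) have "[int l = int l'] (mod int n)" by (simp add: cong_add_lcancel)
    then have "l = l'" using assms(3) by (simp add: cong_int_iff cong_less_modulus_unique_nat)
    with \<open>x = x'\<close> show ?thesis by simp
  next
    case 2
    then have "int n dvd x + int l - x'" "int n dvd x - (x' + int l')"
      by (simp_all add: cong_iff_dvd_diff)
    then have "int n dvd (x + int l - x') - (x - (x' + int l'))" by (rule dvd_diff)
    then have "int n dvd int (l + l')" by simp
    then show ?thesis using assms(1-3) by (simp add: zdvd_not_zless)
  qed
qed

lemma sum_card_circ_edges_le:
  assumes "finite E'" "2 * d < n"
  shows "(\<Sum>l=1..d. card {x \<in> {0..<int n}. circ_edge n x l \<in> E'}) \<le> card E'"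
proof -
  let ?D = "\<lambda>l. {x \<in> {0..<int n}. circ_edge n x l \<in> E'}"
  have "finite (?D l)" for l by (rule finite_subset[of _ "{0..<int n}"]) auto
  then have "(\<Sum>l=1..d. card (?D l)) = card (Sigma {1..d} ?D)"
    by (intro card_SigmaI[symmetric]) auto
  also have "\<dots> \<le> card E'"
  proof (rule card_inj_on_le[OF _ _ assms(1)])
    show "inj_on (\<lambda>(l, x). circ_edge n x l) (Sigma {1..d} ?D)"
    proof (rule inj_onI)
      fix p p' assume "p \<in> Sigma {1..d} ?D" "p' \<in> Sigma {1..d} ?D"
        and "(\<lambda>(l, x). circ_edge n x l) p = (\<lambda>(l, x). circ_edge n x l) p'"
      moreover obtain l x l' x' where "p = (l, x)" "p' = (l', x')" by fastforce
      ultimately show "p = p'" using circ_edge_inj[of l l' n x x'] assms(2) by auto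
    qed
  qed auto
  finally show ?thesis .
qed

lemma exists_length_not_cong_triple:
  fixes n d j :: nat
  assumes "9 \<le> n" "2 \<le> d" "2 * d < n" "j \<in> {1..d}"
  shows "\<exists>l\<in>{1..d}. l \<noteq> j \<and> \<not> [int l = 3 * int j] (mod int n) \<and> \<not> [int l = - 3 * int j] (mod int n)"
proof -
  let ?bad = "\<lambda>l. [int l = 3 * int j] (mod int n) \<or> [int l = - 3 * int j] (mod int n)"
  have not_dvd: "\<not> int n dvd m" if "0 < \<bar>m\<bar>" "\<bar>m\<bar> < int n" for m
    using that zdvd_not_zless[of "\<bar>m\<bar>" "int n"] by simp
  have at_most_one_bad: "l = l'" if "l \<in> {1..d}" "l' \<in> {1..d}" "?bad l" "?bad l'" for l l'
  proof -
    have "[int l = int l'] (mod int n) \<or> [int l + int l' = 0] (mod int n)"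
      using that(3,4)
    proof (elim disjE)
      assume "[int l = 3 * int j] (mod int n)" "[int l' = - 3 * int j] (mod int n)"
      from cong_add[OF this] show ?thesis by simp
    next
      assume "[int l = - 3 * int j] (mod int n)" "[int l' = 3 * int j] (mod int n)"
      from cong_add[OF this] show ?thesis by simp
    qed (blast intro: cong_sym cong_trans)+
    then have "int n dvd int l - int l' \<or> int n dvd int l + int l'"
      by (simp add: cong_iff_dvd_diff)
    then show ?thesis using that(1,2) assms(3) not_dvd[of "int l - int l'"] not_dvd[of "int l + int l'"]
      by fastforce
  qed
  show ?thesis
  proof (cases "d = 2")
    \<comment> \<open>the only place where n \<ge> 9 is needed: for n = 5 or 7 the single candidate l can be bad\<close>
    case True
    then consider "j = 1" | "j = 2" using assms(4) by fastforce
    then show ?thesis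
    proof cases
      case 1
      then show ?thesis using \<open>d = 2\<close> assms(1) not_dvd[of "-1"] not_dvd[of 5]
        by (intro bexI[of _ 2]) (auto simp: cong_iff_dvd_diff)
    next
      case 2
      then show ?thesis using \<open>d = 2\<close> assms(1) not_dvd[of "-5"] not_dvd[of 7]
        by (intro bexI[of _ 1]) (auto simp: cong_iff_dvd_diff)
    qed
  next
    case False
    define l l' where "l = (if j = 1 then 2 else (1::nat))" and "l' = (if j = 3 then 2 else (3::nat))"
    have l: "l \<in> {1..d}" "l' \<in> {1..d}" "l \<noteq> l'" "l \<noteq> j" "l' \<noteq> j"
      using False assms(2) by (auto simp: l_def l'_def)
    then have "\<not> ?bad l \<or> \<not> ?bad l'" using at_most_one_bad by blast
    then show ?thesis using l by blast
  qed
qed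

text \<open>The lower bound in residue coordinates: \<open>D l\<close> holds the starting points x of the deleted
  edges {x, x + l}, and w is a fractional cover of weight < n/2 of the remaining ones.\<close>

locale light_cover =
  fixes n d :: nat and D :: "nat \<Rightarrow> int set" and w :: "int \<Rightarrow> real"
  assumes odd_n: "odd n" and n_ge_9: "9 \<le> n" and d_ge_2: "2 \<le> d" and d_less: "2 * d < n"
    and D_subset: "D l \<subseteq> {0..<int n}"
    and w_cong: "[x = y] (mod int n) \<Longrightarrow> w x = w y"
    and cover: "1 \<le> l \<Longrightarrow> l \<le> d \<Longrightarrow> x mod int n \<notin> D l \<Longrightarrow> 1 \<le> w x + w (x + int l)"
    and light: "(\<Sum>x\<in>{0..<int n}. w x) < real n / 2"
begin

lemma n_pos: "0 < n"
  using n_ge_9 by simp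

lemma finite_D: "finite (D l)"
  using D_subset finite_subset by blast

lemma mod_in_D_if_light:
  assumes "1 \<le> l" "l \<le> d" "[v = u + int l] (mod int n)" "w u + w v < 1"
  shows "u mod int n \<in> D l"
  using cover[OF assms(1,2), of u] w_cong[OF assms(3)] assms(4) by force

lemma invariant_set_sum_ge:
  assumes "1 \<le> j" "j \<le> d" "A \<subseteq> {0..<int n}"
    and "\<And>y. y \<in> A \<Longrightarrow> (y + int j) mod int n \<in> A" "\<And>y. y \<in> A \<Longrightarrow> y \<notin> D j"
  shows "real (card A) \<le> 2 * (\<Sum>y\<in>A. w y)"
proof (rule cycle_cover_sum_ge)
  show "finite A" using assms(3) finite_subset by blast
  show "inj_on (\<lambda>y. (y + int j) mod int n) A"
  proof (rule inj_onI)
    fix y y' assume "y \<in> A" "y' \<in> A" "(y + int j) mod int n = (y' + int j) mod int n"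
    moreover have "y \<in> {0..<int n}" "y' \<in> {0..<int n}" using \<open>y \<in> A\<close> \<open>y' \<in> A\<close> assms(3) by auto
    ultimately show "y = y'" using cong_less_imp_eq_int[of y "int n" y']
      by (simp add: cong_def[symmetric] cong_add_rcancel)
  qed
  show "1 \<le> w y + w ((y + int j) mod int n)" if "y \<in> A" for y
    using cover[OF assms(1,2), of y] w_cong[of "(y + int j) mod int n" "y + int j"] assms(3,5) that
    by (auto simp: cong_def)
qed (use assms(4) in blast)

lemma D_nonempty:
  assumes "1 \<le> j" "j \<le> d"
  shows "D j \<noteq> {}"
proof
  assume "D j = {}"
  then have "real (card {0..<int n}) \<le> 2 * (\<Sum>y\<in>{0..<int n}. w y)"
    using n_pos by (intro invariant_set_sum_ge[OF assms]) auto
  then show False using light by simp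
qed

end

text \<open>Exactly one edge {a, a + j} of length j is deleted. Its orbit is traversed by the path
  \<open>path 0 = a + j, \<dots>, path (c - 1) \<equiv> a\<close>, all of whose consecutive j-edges are present.\<close>

locale single_deletion = light_cover +
  fixes j :: nat and a :: int
  assumes j_ge_1: "1 \<le> j" and j_le_d: "j \<le> d" and D_j: "D j = {a}"
begin

definition c :: nat where "c = n div gcd n j"

definition path :: "nat \<Rightarrow> int" where "path r = a + int (Suc r) * int j"

lemma a_mod [simp]: "a mod int n = a"
  using D_j D_subset[of j] by auto

lemma dvd_mult_j_iff: "int n dvd r * int j \<longleftrightarrow> int c dvd r"
  unfolding c_def using j_ge_1 by (intro int_dvd_mult_iff_dvd_div_gcd) simp

lemma c_odd: "odd c"
proof -
  have "c dvd n" unfolding c_def by (metis dvd_div_mult_self dvd_triv_left gcd_dvd1)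
  then show ?thesis using odd_n dvd_trans[of 2 c n] by blast
qed

lemma c_ge_3: "3 \<le> c"
proof -
  have "\<not> int n dvd 1 * int j"
    using j_ge_1 j_le_d d_less zdvd_not_zless[of "int j" "int n"] by simp
  then have "c \<noteq> 1" using dvd_mult_j_iff[of 1] by auto
  moreover have "0 < c" using n_pos j_ge_1 by (simp add: c_def div_greater_zero_iff)
  ultimately show ?thesis using c_odd by presburger
qed

lemma path_cong_iff:
  assumes "p < c" "q < c"
  shows "[path p = path q] (mod int n) \<longleftrightarrow> p = q"
proof -
  have "[path p = path q] (mod int n) \<longleftrightarrow> int n dvd (int p - int q) * int j"
    by (simp add: cong_iff_dvd_diff path_def algebra_simps)
  also have "\<dots> \<longleftrightarrow> [p = q] (mod c)"
    by (simp add: dvd_mult_j_iff cong_iff_dvd_diff flip: cong_int_iff)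
  finally show ?thesis using assms by (auto dest: cong_less_modulus_unique_nat)
qed

lemma path_cong_gcd: "[path r = a] (mod int (gcd n j))"
  by (simp add: path_def cong_add_lcancel_0 cong_0_iff)

lemma covered_off_orbit:
  assumes "\<not> [y = a] (mod int (gcd n j))"
  shows "1 \<le> w y + w (y + int j)"
proof (rule cover[OF j_ge_1 j_le_d])
  have "\<not> [y = a] (mod int n)"
    using assms cong_dvd_modulus[of y a "int n" "int (gcd n j)"] by auto
  then show "y mod int n \<notin> D j" using D_j by (auto simp: cong_def)
qed

lemma covered_along_path:
  assumes "r + 1 < c"
  shows "1 \<le> w (path r) + w (path (r + 1))"
proof -
  have "\<not> int c dvd int (r + 1)" using assms zdvd_not_zless[of "int (r + 1)" "int c"] by simp
  then have "\<not> [path r = a] (mod int n)"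
    by (simp add: path_def cong_add_lcancel_0 cong_0_iff dvd_mult_j_iff)
  then have "path r mod int n \<notin> D j" using D_j by (auto simp: cong_def)
  moreover have "path r + int j = path (r + 1)" by (simp add: path_def algebra_simps)
  ultimately show ?thesis using cover[OF j_ge_1 j_le_d, of "path r"] by simp
qed

lemma sum_path_orbit: "(\<Sum>y\<in>shift_orbit n j a. w y) = (\<Sum>r<c. w (path r))"
proof -
  have "shift_orbit n j a = shift_orbit n j (path 0)"
    using path_cong_gcd by (intro shift_orbit_cong) (simp add: cong_sym)
  moreover have "w ((path 0 + int r * int j) mod int n) = w (path r)" for r
    by (rule w_cong) (simp add: cong_def path_def algebra_simps)
  moreover have "(\<Sum>y\<in>shift_orbit n j (path 0). w y) = (\<Sum>r<c. w ((path 0 + int r * int j) mod int n))"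
    using sum_shift_orbit[OF n_pos, of j w "path 0"] j_ge_1 by (simp add: c_def)
  ultimately show ?thesis by simp
qed

lemma sum_outside_orbits_ge:
  assumes "a \<in> Z"
  defines "A \<equiv> {0..<int n} - (\<Union>z\<in>Z. shift_orbit n j z)"
  shows "real (card A) \<le> 2 * (\<Sum>y\<in>A. w y)"
proof (rule invariant_set_sum_ge[OF j_ge_1 j_le_d])
  show "(y + int j) mod int n \<in> A" if "y \<in> A" for y
    using that n_pos shift_mem_shift_orbit_iff[OF n_pos] by (auto simp: A_def shift_orbit_def)
  show "y \<notin> D j" if "y \<in> A" for y
    using that assms(1) D_j by (auto simp: A_def shift_orbit_def)
qed (auto simp: A_def)

lemma light_even_path_pair:
  assumes "p < q" "q < c" "even p" "even q"
  shows "w (path p) + w (path q) < 1"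
proof (rule ccontr)
  assume heavy: "\<not> ?thesis"
  let ?O = "shift_orbit n j a"
  have fin: "finite ?O" by (rule finite_subset[OF shift_orbit_subset]) simp
  have "card ?O = c" using card_shift_orbit[OF n_pos] j_ge_1 by (simp add: c_def)
  then have "c \<le> n" using card_mono[OF _ shift_orbit_subset, of n j a] by simp
  have "real c \<le> 2 * (\<Sum>y\<in>?O. w y)"
    unfolding sum_path_orbit
    by (rule odd_path_chord_sum_ge[OF c_odd assms]) (use covered_along_path heavy in auto)
  moreover have "real (card ({0..<int n} - ?O)) \<le> 2 * (\<Sum>y\<in>{0..<int n} - ?O. w y)"
    using sum_outside_orbits_ge[of "{a}"] by simp
  moreover have "card ({0..<int n} - ?O) = n - c"
    using \<open>card ?O = c\<close> by (simp add: card_Diff_subset[OF fin shift_orbit_subset])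
  moreover have "(\<Sum>y\<in>{0..<int n}. w y) = (\<Sum>y\<in>{0..<int n} - ?O. w y) + (\<Sum>y\<in>?O. w y)"
    using shift_orbit_subset by (intro sum.subset_diff) auto
  ultimately show False using light \<open>c \<le> n\<close> by (simp add: of_nat_diff)
qed

lemma light_even_path_off_orbit:
  assumes "p < c" "even p" "\<not> [z = a] (mod int (gcd n j))"
  shows "w (path p) + w z < 1"
proof (rule ccontr)
  assume heavy: "\<not> ?thesis"
  let ?O = "shift_orbit n j a" and ?O' = "shift_orbit n j z"
  have fin: "finite (shift_orbit n j y)" for y by (rule finite_subset[OF shift_orbit_subset]) simp
  have disj: "?O \<inter> ?O' = {}"
    using assms(3) by (intro shift_orbits_disjoint) (simp add: cong_sym_eq)
  have "card (?O \<union> ?O') = 2 * c"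
    using card_shift_orbit[OF n_pos] j_ge_1 by (simp add: card_Un_disjoint[OF fin fin disj] c_def)
  then have "2 * c \<le> n" using card_mono[of "{0..<int n}" "?O \<union> ?O'"] shift_orbit_subset by simp
  have path_part: "real c - 1 + 2 * w (path p) \<le> 2 * (\<Sum>y\<in>?O. w y)"
    unfolding sum_path_orbit using c_odd assms covered_along_path by (intro odd_path_sum_ge) auto
  have "(\<Sum>y\<in>?O'. w y) = (\<Sum>r<c. w ((z + int r * int j) mod int n))"
    using sum_shift_orbit[OF n_pos, of j w z] j_ge_1 by (simp add: c_def)
  also have "\<dots> = (\<Sum>r<c. w (z + int r * int j))"
    by (intro sum.cong refl w_cong) simp
  finally have other_part: "real c - 1 + 2 * w z \<le> 2 * (\<Sum>y\<in>?O'. w y)"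
    using odd_path_sum_ge[OF c_odd, of 0 "\<lambda>r. w (z + int r * int j)"] c_ge_3
      covered_off_orbit[of "z + int _ * int j"] assms(3)
    by (simp add: cong_add_dvd_iff algebra_simps)
  have "real (card ({0..<int n} - (?O \<union> ?O'))) \<le> 2 * (\<Sum>y\<in>{0..<int n} - (?O \<union> ?O'). w y)"
    using sum_outside_orbits_ge[of "{a, z}"] by simp
  moreover have "card ({0..<int n} - (?O \<union> ?O')) = n - 2 * c"
    using \<open>card (?O \<union> ?O') = 2 * c\<close> shift_orbit_subset fin
    by (subst card_Diff_subset) auto
  moreover have "(\<Sum>y\<in>{0..<int n}. w y)
      = (\<Sum>y\<in>{0..<int n} - (?O \<union> ?O'). w y) + ((\<Sum>y\<in>?O. w y) + (\<Sum>y\<in>?O'. w y))"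
    using sum.subset_diff[of "?O \<union> ?O'" "{0..<int n}" w] sum.union_disjoint[OF fin fin disj, of w]
      shift_orbit_subset by simp
  ultimately show False
    using light path_part other_part heavy \<open>2 * c \<le> n\<close> by (simp add: of_nat_diff)
qed

lemma card_D_ge_even_path_points:
  assumes "2 * k \<le> c + 1" "\<And>i. i < k \<Longrightarrow> (path (2 * i) + e) mod int n \<in> D l"
  shows "k \<le> card (D l)"
proof -
  let ?h = "\<lambda>i. (path (2 * i) + e) mod int n"
  have "inj_on ?h {..<k}"
  proof (rule inj_onI)
    fix i i' assume "i \<in> {..<k}" "i' \<in> {..<k}" "?h i = ?h i'"
    then have "[path (2 * i) = path (2 * i')] (mod int n)" "2 * i < c" "2 * i' < c"
      using assms(1) by (auto simp: cong_def[symmetric] cong_add_rcancel)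
    then show "i = i'" using path_cong_iff by simp
  qed
  then have "card (?h ` {..<k}) = k" by (simp add: card_image)
  moreover have "?h ` {..<k} \<subseteq> D l" using assms(2) by blast
  ultimately show ?thesis using card_mono[OF finite_D, of "?h ` {..<k}"] by simp
qed

lemma card_D_ge_3_off_orbit:
  assumes "1 \<le> l" "l \<le> d" "\<not> int (gcd n j) dvd int l"
  shows "3 \<le> card (D l)"
proof -
  have off: "\<not> [path r + e = a] (mod int (gcd n j))" if "e = int l \<or> e = - int l" for r e
  proof
    assume "[path r + e = a] (mod int (gcd n j))"
    moreover have "[path r + e = a + e] (mod int (gcd n j))"
      using path_cong_gcd by (rule cong_add) simp
    ultimately have "[a + e = a] (mod int (gcd n j))" using cong_sym cong_trans by meson
    then show False using that assms(3) by (auto simp: cong_add_lcancel_0 cong_0_iff)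
  qed
  have forward: "path (2 * i) mod int n \<in> D l" if "2 * i < c" for i
    using mod_in_D_if_light[OF assms(1,2) cong_refl] light_even_path_off_orbit that off by simp
  have backward: "(path 0 - int l) mod int n \<in> D l"
    using mod_in_D_if_light[OF assms(1,2), of "path 0" "path 0 - int l"]
      light_even_path_off_orbit[of 0 "path 0 - int l"] off[of "- int l" 0] c_ge_3
    by (simp add: add.commute)
  let ?S = "{(path 0 - int l) mod int n, path 0 mod int n, path 2 mod int n}"
  have new: "(path 0 - int l) mod int n \<noteq> path (2 * i) mod int n" for i
  proof
    assume "(path 0 - int l) mod int n = path (2 * i) mod int n"
    then have "[path 0 + - int l = path (2 * i)] (mod int n)" by (simp add: cong_def)
    then have "[path 0 + - int l = path (2 * i)] (mod int (gcd n j))"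
      by (rule cong_dvd_modulus) simp
    from cong_trans[OF this path_cong_gcd] show False using off[of "- int l" 0] by simp
  qed
  moreover have "path 0 mod int n \<noteq> path 2 mod int n"
    using path_cong_iff[of 0 2] c_ge_3 by (simp add: cong_def)
  ultimately have "card ?S = 3" using new[of 0] new[of 1] by simp
  moreover have "?S \<subseteq> D l" using forward[of 0] forward[of 1] backward c_ge_3 by simp
  ultimately show ?thesis using card_mono[OF finite_D, of ?S l] by simp
qed

lemma orbit_position:
  assumes "1 \<le> l" "l \<le> d" "l \<noteq> j" "int (gcd n j) dvd int l"
  obtains s where "2 \<le> s" "s + 2 \<le> c" "[int s * int j = int l] (mod int n)"
proof -
  have l_less: "int l + int j < int n" using assms(2) j_le_d d_less by simp
  have "int l mod int n \<in> shift_orbit n j 0"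
    using assms(4) n_pos by (simp add: shift_orbit_def cong_0_iff dvd_mod_iff)
  then have "int l mod int n \<in> (\<lambda>r. (0 + int r * int j) mod int n) ` {..<c}"
    using bij_betw_shift_orbit[OF n_pos, of j 0] j_ge_1 by (simp add: bij_betw_def c_def)
  then obtain s where "s < c" "(0 + int s * int j) mod int n = int l mod int n" by auto
  then have s: "s < c" "[int s * int j = int l] (mod int n)" by (simp_all add: cong_def)
  have "s \<noteq> 0"
  proof
    assume "s = 0"
    then have "[int l = 0] (mod int n)" using s(2) by (simp add: cong_sym_eq)
    then show False using assms(1) l_less zdvd_not_zless[of "int l" "int n"] by (simp add: cong_0_iff)
  qed
  moreover have "s \<noteq> 1"
  proof
    assume "s = 1"
    then have "[j = l] (mod n)" using s(2) by (simp add: cong_int_iff)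
    then show False using assms(3) l_less cong_less_modulus_unique_nat[of j l n] by simp
  qed
  moreover have "s \<noteq> c - 1"
  proof
    assume "s = c - 1"
    then have "int s * int j + int j = int c * int j" using c_ge_3 by (simp add: of_nat_diff algebra_simps)
    moreover have "[int c * int j = 0] (mod int n)" by (simp add: cong_0_iff dvd_mult_j_iff)
    ultimately have "[int l + int j = 0] (mod int n)"
      using cong_trans[OF cong_add[OF cong_sym[OF s(2)] cong_refl]] by metis
    then show False using assms(1) l_less zdvd_not_zless[of "int l + int j" "int n"]
      by (simp add: cong_0_iff)
  qed
  ultimately have "2 \<le> s" "s + 2 \<le> c" using s(1) by auto
  then show ?thesis using that s(2) by blast
qed

lemma path_add: "path (p + q) = path p + int q * int j"
  by (simp add: path_def algebra_simps)

lemma card_D_ge_even_position: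
  assumes "1 \<le> l" "l \<le> d" "even s" "2 \<le> s" "s + 2 \<le> c" "[int s * int j = int l] (mod int n)"
  shows "2 \<le> card (D l)" and "\<not> [int l = - 3 * int j] (mod int n) \<Longrightarrow> 3 \<le> card (D l)"
proof -
  have "s + 3 \<le> c" using assms(3,5) c_odd by presburger
  define k where "k = (c - s + 1) div 2"
  have k: "k \<le> card (D l)"
  proof (rule card_D_ge_even_path_points[of k 0])
    show "2 * k \<le> c + 1" by (simp add: k_def)
    fix i assume "i < k"
    then have "2 * i + s < c" using assms(3) c_odd \<open>s + 3 \<le> c\<close> unfolding k_def by presburger
    have "[path (2 * i + s) = path (2 * i) + int l] (mod int n)"
      using assms(6) by (simp add: path_add cong_add_lcancel)
    moreover have "w (path (2 * i)) + w (path (2 * i + s)) < 1"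
      using \<open>2 * i + s < c\<close> assms(3,4) by (intro light_even_path_pair) auto
    ultimately show "(path (2 * i) + 0) mod int n \<in> D l"
      using mod_in_D_if_light[OF assms(1,2)] by simp
  qed
  moreover have "2 \<le> k" using \<open>s + 3 \<le> c\<close> by (simp add: k_def)
  ultimately show "2 \<le> card (D l)" by simp
  assume not_bad: "\<not> [int l = - 3 * int j] (mod int n)"
  have "s \<noteq> c - 3"
  proof
    assume "s = c - 3"
    then have "int s * int j = int c * int j - 3 * int j" using c_ge_3 by (simp add: of_nat_diff algebra_simps)
    moreover have "[int c * int j - 3 * int j = 0 - 3 * int j] (mod int n)"
      by (rule cong_diff) (simp_all add: cong_0_iff dvd_mult_j_iff)
    ultimately have "[int s * int j = - 3 * int j] (mod int n)" by simp
    with cong_sym[OF assms(6)] have "[int l = - 3 * int j] (mod int n)" by (rule cong_trans)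
    with not_bad show False ..
  qed
  then have "s + 5 \<le> c" using assms(3) c_odd \<open>s + 3 \<le> c\<close> by presburger
  then have "3 \<le> k" unfolding k_def by presburger
  with k show "3 \<le> card (D l)" by simp
qed

lemma card_D_ge_odd_position:
  assumes "1 \<le> l" "l \<le> d" "odd s" "2 \<le> s" "s < c" "[int s * int j = int l] (mod int n)"
  shows "2 \<le> card (D l)" and "\<not> [int l = 3 * int j] (mod int n) \<Longrightarrow> 3 \<le> card (D l)"
proof -
  define k where "k = (s + 1) div 2"
  have k: "k \<le> card (D l)"
  proof (rule card_D_ge_even_path_points[of k "- int l"])
    show "2 * k \<le> c + 1" using assms(3,5) by (simp add: k_def)
    fix i assume "i < k"
    then have "2 * i < s" using assms(3) unfolding k_def by presburger
    have "int (c - s) * int j = int c * int j - int s * int j"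
      using assms(5) by (simp add: of_nat_diff algebra_simps)
    moreover have "[int c * int j - int s * int j = 0 - int l] (mod int n)"
      by (rule cong_diff) (simp_all add: assms(6) cong_0_iff dvd_mult_j_iff)
    ultimately have "[path (2 * i) + int (c - s) * int j = path (2 * i) + - int l] (mod int n)"
      by (simp only: cong_add_lcancel diff_0)
    then have "w (path (2 * i) - int l) = w (path (2 * i + (c - s)))"
      by (intro w_cong) (simp add: path_add cong_sym_eq)
    moreover have "w (path (2 * i)) + w (path (2 * i + (c - s))) < 1"
      using \<open>2 * i < s\<close> assms(3,5) c_odd by (intro light_even_path_pair) auto
    ultimately show "(path (2 * i) + - int l) mod int n \<in> D l"
      using mod_in_D_if_light[OF assms(1,2), of "path (2 * i)" "path (2 * i) - int l"] by simp
  qed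
  moreover have "2 \<le> k" using assms(3,4) unfolding k_def by presburger
  ultimately show "2 \<le> card (D l)" by simp
  assume "\<not> [int l = 3 * int j] (mod int n)"
  then have "s \<noteq> 3" using assms(6) by (auto simp: cong_sym_eq)
  then have "3 \<le> k" using assms(3,4) unfolding k_def by presburger
  with k show "3 \<le> card (D l)" by simp
qed

lemma card_D_ge:
  assumes "1 \<le> l" "l \<le> d" "l \<noteq> j"
  shows "2 \<le> card (D l)"
    and "\<not> [int l = 3 * int j] (mod int n) \<Longrightarrow> \<not> [int l = - 3 * int j] (mod int n) \<Longrightarrow> 3 \<le> card (D l)"
proof -
  have "2 \<le> card (D l) \<and>
      (\<not> [int l = 3 * int j] (mod int n) \<and> \<not> [int l = - 3 * int j] (mod int n) \<longrightarrow> 3 \<le> card (D l))"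
  proof (cases "int (gcd n j) dvd int l")
    case True
    then obtain s where s: "2 \<le> s" "s + 2 \<le> c" "[int s * int j = int l] (mod int n)"
      using orbit_position[OF assms] by blast
    show ?thesis
    proof (cases "even s")
      case True
      then show ?thesis using card_D_ge_even_position[OF assms(1,2) True s] by blast
    next
      case False
      then show ?thesis using card_D_ge_odd_position[OF assms(1,2) False s(1) _ s(3)] s(2) by simp
    qed
  next
    case False
    then show ?thesis using card_D_ge_3_off_orbit[OF assms(1,2)] by simp
  qed
  then show "2 \<le> card (D l)"
    and "\<not> [int l = 3 * int j] (mod int n) \<Longrightarrow> \<not> [int l = - 3 * int j] (mod int n) \<Longrightarrow> 3 \<le> card (D l)"
    by blast+
qed

end

context light_cover
begin

theorem sum_card_D_ge: "2 * d \<le> (\<Sum>l=1..d. card (D l))"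
proof (rule ccontr)
  assume less: "\<not> ?thesis"
  then obtain j where j: "j \<in> {1..d}" "card (D j) \<le> 1"
    using sum_mono[of "{1..d}" "\<lambda>_. 2" "\<lambda>l. card (D l)"] by (force simp: not_le)
  moreover have "card (D j) \<noteq> 0" using D_nonempty finite_D j(1) by simp
  ultimately have "card (D j) = 1" by simp
  then obtain a where "D j = {a}" by (rule card_1_singletonE)
  then interpret single_deletion n d D w j a
    using j by unfold_locales auto
  obtain l0 where l0: "l0 \<in> {1..d}" "l0 \<noteq> j"
    "\<not> [int l0 = 3 * int j] (mod int n)" "\<not> [int l0 = - 3 * int j] (mod int n)"
    using exists_length_not_cong_triple[OF n_ge_9 d_ge_2 d_less j(1)] by blast
  have "(\<Sum>l=1..d. card (D l)) = card (D j) + (\<Sum>l\<in>{1..d} - {j}. card (D l))"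
    using j(1) by (rule sum.remove[OF finite_atLeastAtMost])
  also have "(\<Sum>l\<in>{1..d} - {j}. card (D l)) = card (D l0) + (\<Sum>l\<in>{1..d} - {j} - {l0}. card (D l))"
    by (rule sum.remove) (use l0 in auto)
  moreover have "2 * (d - 2) \<le> (\<Sum>l\<in>{1..d} - {j} - {l0}. card (D l))"
    using sum_mono[of "{1..d} - {j} - {l0}" "\<lambda>_. 2" "\<lambda>l. card (D l)"] card_D_ge(1) j(1) l0(1,2)
    by (simp add: card_Diff_singleton)
  moreover have "3 \<le> card (D l0)" using card_D_ge(2) l0 by simp
  ultimately show False using less d_ge_2 \<open>card (D j) = 1\<close> by simp
qed

end

lemma circulant_tau_star_ge:
  assumes "odd n" "9 \<le> n" "2 \<le> d" "2 * d < n" "finite E'" "card E' < 2 * d"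
  shows "real n / 2 \<le> tau_star {1..n} (circulant_edges (2 * d) n - E')"
proof (rule tau_star_geI, rule ccontr)
  fix f assume f: "frac_vertex_cover {1..n} (circulant_edges (2 * d) n - E') f"
    and "\<not> real n / 2 \<le> (\<Sum>v\<in>{1..n}. f v)"
  let ?D = "\<lambda>l. {x \<in> {0..<int n}. circ_edge n x l \<in> E'}"
  interpret light_cover n d ?D "\<lambda>x. f (circ_vertex n x)"
  proof unfold_locales
    show "f (circ_vertex n x) = f (circ_vertex n y)" if "[x = y] (mod int n)" for x y
      using that assms(2) circ_vertex_eq_iff[of n x y] by simp
    show "1 \<le> f (circ_vertex n x) + f (circ_vertex n (x + int l))"
      if "1 \<le> l" "l \<le> d" "x mod int n \<notin> ?D l" for l x
    proof -
      have "circ_edge n x l \<in> circulant_edges (2 * d) n - E'"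
        using that assms(2,4) circ_edge_in_circulant_edges[of l "2 * d" n x] by simp
      then show ?thesis using f by (simp add: frac_vertex_cover_def circ_edge_def)
    qed
    show "(\<Sum>x\<in>{0..<int n}. f (circ_vertex n x)) < real n / 2"
      using \<open>\<not> real n / 2 \<le> (\<Sum>v\<in>{1..n}. f v)\<close> sum_circ_vertex[of f n] by linarith
  qed (use assms in auto)
  have "2 * d \<le> (\<Sum>l=1..d. card (?D l))" by (rule sum_card_D_ge)
  also have "\<dots> \<le> card E'" using assms(4,5) by (rule sum_card_circ_edges_le[rotated])
  finally show False using assms(6) by simp
qed

lemma finite_circulant_edges: "finite (circulant_edges k n)"
  by (rule finite_subset[of _ "Pow {1..n}"]) (auto simp: circulant_edges_def)

lemma card_circulant_star:
  assumes "1 \<le> d" "2 * d < n"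
  shows "card {e \<in> circulant_edges (2 * d) n. 1 \<in> e} = 2 * d"
proof -
  let ?W = "{2..d + 1} \<union> {n + 1 - d..n}"
  have "{e \<in> circulant_edges (2 * d) n. 1 \<in> e} = (\<lambda>v. {1, v}) ` ?W"
  proof (intro equalityI subsetI)
    fix e assume "e \<in> {e \<in> circulant_edges (2 * d) n. 1 \<in> e}"
    then obtain i v where "e = {i, v}" "1 \<le> i" "i < v" "v \<le> n" "min (v - i) (i + n - v) \<le> d" "1 \<in> e"
      by (auto simp: circulant_edges_def)
    then show "e \<in> (\<lambda>v. {1, v}) ` ?W" by auto
  next
    fix e assume "e \<in> (\<lambda>v. {1, v}) ` ?W"
    then obtain v where v: "e = {1, v}" "v \<in> ?W" by blast
    have "e \<in> circulant_edges (2 * d) n"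
      unfolding circulant_edges_def using v assms by (intro CollectI exI[of _ 1] exI[of _ v]) auto
    then show "e \<in> {e \<in> circulant_edges (2 * d) n. 1 \<in> e}" using v by simp
  qed
  moreover have "inj_on (\<lambda>v. {1, v}) ?W" by (rule inj_onI) (auto simp: doubleton_eq_iff)
  moreover have "card ?W = 2 * d" using assms by (subst card_Un_disjoint) auto
  ultimately show ?thesis by (simp add: card_image)
qed

theorem theorem31:
  fixes n k :: nat
  assumes "n \<ge> 9" and "odd n" and "even k" and "4 \<le> k" and "k < n"
  shows "mu {1..n} (circulant_edges k n) = k"
proof -
  obtain d where k: "k = 2 * d" using \<open>even k\<close> by blast
  have d: "2 \<le> d" "2 * d < n" using assms k by auto
  show ?thesis unfolding k
  proof (rule mu_eqI)
    show "{e \<in> circulant_edges (2 * d) n. 1 \<in> e} \<subseteq> circulant_edges (2 * d) n" by blast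
    show "card {e \<in> circulant_edges (2 * d) n. 1 \<in> e} = 2 * d"
      using card_circulant_star d by simp
    show "tau_star {1..n} (circulant_edges (2 * d) n - {e \<in> circulant_edges (2 * d) n. 1 \<in> e})
        < real (card {1..n}) / 2"
      using tau_star_remove_star_less[of "{1..n}" 1] assms(1) by simp
    show "real (card {1..n}) / 2 \<le> tau_star {1..n} (circulant_edges (2 * d) n - E')"
      if "E' \<subseteq> circulant_edges (2 * d) n" "card E' < 2 * d" for E'
      using circulant_tau_star_ge[OF assms(2,1) d] finite_subset[OF that(1) finite_circulant_edges] that(2)
      by simp
  qed
qed

end
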